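(* Let $n\ge 4$ and $t\in[n-1]$ be integers, and let $S$ be a weak $(2n-2t)$-resolving set of $K_n\times K_n$, with $\overline{S}=V\setminus S$. For all distinct $i,i'\in[n]$: if there is some $j\in[n]$ with $(i,j)\in\overline S$ and $(i',j)\in\overline S$, then $|(L_i\cup L_{i'})\cap\overline S|\le 2t$; otherwise $|(L_i\cup L_{i'})\cap\overline S|\le 2t+1$.
   Context: $K_n\times K_n$ is the direct product of two complete graphs on $n$ vertices: vertex set $V=[n]\times[n]$ with $[n]=\{1,\dots,n\}$, and $(i,j)$ adjacent to $(i',j')$ iff $i\ne i'$ and $j\ne j'$. For $i\in[n]$, $L_i=\{(i,j):j\in[n]\}$ is a vertical layer. For vertices $x,y,z$ and $S\subseteq V$, $\Delta_z(x,y)=|d(x,z)-d(y,z)|$ (with $d$ the graph distance) and $\Delta_S(x,y)=\sum_{z\in S}\Delta_z(x,y)$. A set $S$ is a weak $k$-resolving set if $\Delta_S(x,y)\ge k$ for all distinct $x,y\in V$. *)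

theory Defs
  imports Main
begin

definition V :: "nat \<Rightarrow> (nat \<times> nat) set" where
  "V n = {1..n} \<times> {1..n}"

definition edges :: "nat \<Rightarrow> ((nat \<times> nat) \<times> (nat \<times> nat)) set" where
  "edges n = {(x, y). x \<in> V n \<and> y \<in> V n \<and> fst x \<noteq> fst y \<and> snd x \<noteq> snd y}"

definition gdist :: "nat \<Rightarrow> nat \<times> nat \<Rightarrow> nat \<times> nat \<Rightarrow> nat" where
  "gdist n x y = (LEAST k. (x, y) \<in> (edges n) ^^ k)"

definition Delta :: "nat \<Rightarrow> nat \<times> nat \<Rightarrow> nat \<times> nat \<Rightarrow> nat \<times> nat \<Rightarrow> nat" where
  "Delta n z x y = nat \<bar>int (gdist n x z) - int (gdist n y z)\<bar>"

definition DeltaS :: "nat \<Rightarrow> (nat \<times> nat) set \<Rightarrow> nat \<times> nat \<Rightarrow> nat \<times> nat \<Rightarrow> nat" where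
  "DeltaS n S x y = (\<Sum>z\<in>S. Delta n z x y)"

definition weak_k_resolving :: "nat \<Rightarrow> nat \<Rightarrow> (nat \<times> nat) set \<Rightarrow> bool" where
  "weak_k_resolving n k S \<longleftrightarrow> S \<subseteq> V n \<and>
     (\<forall>x\<in>V n. \<forall>y\<in>V n. x \<noteq> y \<longrightarrow> DeltaS n S x y \<ge> k)"

definition layer :: "nat \<Rightarrow> nat \<Rightarrow> (nat \<times> nat) set" where
  "layer n i = {(i, j) | j. j \<in> {1..n}}"

end

theory Submission
  imports Defs
begin

text \<open>
  For two vertices x = (i,j) and y = (i',j) of the same column in different layers, every vertex
  outside L_i \<union> L_i' is at the same distance from x and y (distances in K_n \<times> K_n are 0, 1, 2),
  every vertex of L_i \<union> L_i' separates them by at most 1, and x and y themselves by 2.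
  Hence 2n - 2t \<le> \<Delta>_S(x,y) \<le> |S \<inter> (L_i \<union> L_i')| + [x \<in> S] + [y \<in> S], and the two layers
  contain 2n vertices. A column avoiding S in both layers gives the bound 2t; otherwise every
  vertex of the two layers outside S has its partner in S, which gives 2t + 1.
\<close>

lemma exists_avoiding_two:
  fixes a c n :: nat
  assumes "3 \<le> n"
  shows "\<exists>p\<in>{1..n}. p \<noteq> a \<and> p \<noteq> c"
proof -
  have "\<exists>p\<in>{1,2,3::nat}. p \<noteq> a \<and> p \<noteq> c" by auto
  then show ?thesis using assms by auto
qed

lemma edges_relpow_2:
  assumes "3 \<le> n" and "x \<in> V n" and "y \<in> V n"
  shows "(x, y) \<in> edges n ^^ 2"
proof -
  obtain a b c d where xy: "x = (a, b)" "y = (c, d)" by fastforce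
  obtain p where p: "p \<in> {1..n}" "p \<noteq> a" "p \<noteq> c" using exists_avoiding_two[OF assms(1)] by blast
  obtain q where q: "q \<in> {1..n}" "q \<noteq> b" "q \<noteq> d" using exists_avoiding_two[OF assms(1)] by blast
  have "(x, (p, q)) \<in> edges n" and "((p, q), y) \<in> edges n"
    using assms(2,3) p q xy by (auto simp: edges_def V_def)
  then show ?thesis unfolding numeral_2_eq_2 by (auto intro: relpow_Suc_I2)
qed

lemma gdist_eq:
  assumes "3 \<le> n" and "x \<in> V n" and "y \<in> V n"
  shows "gdist n x y =
    (if x = y then 0 else if fst x \<noteq> fst y \<and> snd x \<noteq> snd y then 1 else 2)"
proof -
  have least_eq: "(LEAST k. (x, y) \<in> edges n ^^ k) = m"
    if "(x, y) \<in> edges n ^^ m" and "\<And>k. k < m \<Longrightarrow> (x, y) \<notin> edges n ^^ k" for m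
    using that by (intro Least_equality) (auto simp: not_le[symmetric])
  have walk_0: "(x, y) \<in> edges n ^^ 0 \<longleftrightarrow> x = y" by simp
  have walk_1: "(x, y) \<in> edges n ^^ 1 \<longleftrightarrow> fst x \<noteq> fst y \<and> snd x \<noteq> snd y"
    using assms(2,3) by (simp add: edges_def)
  have below_2: "k < 2 \<longleftrightarrow> k = 0 \<or> k = 1" for k :: nat by auto
  show ?thesis
    unfolding gdist_def
    using least_eq[of 0] least_eq[of 1] least_eq[of 2] edges_relpow_2[OF assms] walk_0 walk_1
    by (auto simp only: below_2 less_one if_split)
qed

lemma Delta_same_column_le:
  assumes "3 \<le> n" and "i \<noteq> i'" and "(i, j) \<in> V n" and "(i', j) \<in> V n" and "z \<in> V n"
  shows "Delta n z (i, j) (i', j) \<le>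
    of_bool (z \<in> layer n i \<union> layer n i') + of_bool (z = (i, j)) + of_bool (z = (i', j))"
proof -
  obtain a b where z: "z = (a, b)" by fastforce
  have "z \<in> layer n i \<union> layer n i' \<longleftrightarrow> a = i \<or> a = i'"
    using assms(5) z by (auto simp: layer_def V_def)
  then show ?thesis
    unfolding Delta_def gdist_eq[OF assms(1,3,5)] gdist_eq[OF assms(1,4,5)]
    using assms(2) z by auto
qed

lemma DeltaS_same_column_le:
  assumes "3 \<le> n" and "i \<noteq> i'" and "(i, j) \<in> V n" and "(i', j) \<in> V n" and "S \<subseteq> V n"
  shows "DeltaS n S (i, j) (i', j) \<le>
    card (S \<inter> (layer n i \<union> layer n i')) + of_bool ((i, j) \<in> S) + of_bool ((i', j) \<in> S)"
proof -
  have "finite S"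
    using assms(5) finite_subset by (auto simp: V_def)
  have "DeltaS n S (i, j) (i', j) \<le> (\<Sum>z\<in>S. of_bool (z \<in> layer n i \<union> layer n i')
      + of_bool (z = (i, j)) + of_bool (z = (i', j)))"
    unfolding DeltaS_def
    using Delta_same_column_le[OF assms(1-4)] assms(5) by (intro sum_mono) blast
  also have "\<dots> = card (S \<inter> (layer n i \<union> layer n i')) + of_bool ((i, j) \<in> S)
      + of_bool ((i', j) \<in> S)"
  proof -
    have "card (S \<inter> {z. z = x}) = of_bool (x \<in> S)" for x :: "nat \<times> nat"
      by (cases "x \<in> S") auto
    then show ?thesis
      using \<open>finite S\<close> by (simp only: sum.distrib sum_of_bool_eq of_nat_id Collect_mem_eq)
  qed
  finally show ?thesis .
qed

lemma card_two_layers: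
  assumes "i \<noteq> i'"
  shows "card (layer n i \<union> layer n i') = 2 * n"
proof -
  have "card (layer n k) = n" for k
  proof -
    have "layer n k = Pair k ` {1..n}" by (auto simp: layer_def)
    then show ?thesis by (simp add: card_image inj_on_def)
  qed
  moreover have "layer n i \<inter> layer n i' = {}"
    using assms by (auto simp: layer_def)
  ultimately show ?thesis
    by (simp add: card_Un_disjoint layer_def)
qed

lemma weak_resolving_two_layers:
  assumes "3 \<le> n" and "weak_k_resolving n k S"
    and "i \<in> {1..n}" and "i' \<in> {1..n}" and "i \<noteq> i'" and "j \<in> {1..n}"
  shows "k + card ((layer n i \<union> layer n i') \<inter> (V n - S)) \<le>
    2 * n + of_bool ((i, j) \<in> S) + of_bool ((i', j) \<in> S)"
proof -
  let ?A = "layer n i \<union> layer n i'"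
  have "S \<subseteq> V n" and "(i, j) \<in> V n" and "(i', j) \<in> V n"
    using assms(2-4,6) by (auto simp: weak_k_resolving_def V_def)
  have "k \<le> DeltaS n S (i, j) (i', j)"
    using assms(2,5) \<open>(i, j) \<in> V n\<close> \<open>(i', j) \<in> V n\<close> by (auto simp: weak_k_resolving_def)
  also have "\<dots> \<le> card (S \<inter> ?A) + of_bool ((i, j) \<in> S) + of_bool ((i', j) \<in> S)"
    by (rule DeltaS_same_column_le) fact+
  finally have "k \<le> card (S \<inter> ?A) + of_bool ((i, j) \<in> S) + of_bool ((i', j) \<in> S)" .
  moreover have "card (S \<inter> ?A) + card (?A \<inter> (V n - S)) = 2 * n"
  proof -
    have "?A \<subseteq> V n" using assms(3,4) by (auto simp: layer_def V_def)
    then have "?A \<inter> (V n - S) = ?A - S \<inter> ?A" by blast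
    moreover have "finite ?A" by (simp add: layer_def)
    ultimately show ?thesis
      using card_two_layers[OF assms(5)] card_mono[of ?A "S \<inter> ?A"]
      by (simp add: card_Diff_subset)
  qed
  ultimately show ?thesis by linarith
qed

theorem mainTheorem7:
  fixes n t :: nat and S :: "(nat \<times> nat) set"
  assumes "n \<ge> 4" and "t \<in> {1..n-1}"
    and "weak_k_resolving n (2*n - 2*t) S"
  shows "\<forall>i\<in>{1..n}. \<forall>i'\<in>{1..n}. i \<noteq> i' \<longrightarrow>
     ((\<exists>j\<in>{1..n}. (i, j) \<in> V n - S \<and> (i', j) \<in> V n - S) \<longrightarrow>
         card ((layer n i \<union> layer n i') \<inter> (V n - S)) \<le> 2*t) \<and>
     (\<not> (\<exists>j\<in>{1..n}. (i, j) \<in> V n - S \<and> (i', j) \<in> V n - S) \<longrightarrow>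
         card ((layer n i \<union> layer n i') \<inter> (V n - S)) \<le> 2*t + 1)"
proof (intro ballI impI conjI)
  fix i i' assume i: "i \<in> {1..n}" and i': "i' \<in> {1..n}" and "i \<noteq> i'"
  have "3 \<le> n" and "t \<le> n" using assms(1,2) by auto
  note bound = weak_resolving_two_layers[OF \<open>3 \<le> n\<close> assms(3) i i' \<open>i \<noteq> i'\<close>]
  let ?C = "(layer n i \<union> layer n i') \<inter> (V n - S)"
  show "card ?C \<le> 2 * t" if common: "\<exists>j\<in>{1..n}. (i, j) \<in> V n - S \<and> (i', j) \<in> V n - S"
  proof -
    obtain j where j: "j \<in> {1..n}" and "(i, j) \<notin> S" and "(i', j) \<notin> S" using common by blast
    then have "2 * n - 2 * t + card ?C \<le> 2 * n" using bound[OF j] by simp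
    then show ?thesis using \<open>t \<le> n\<close> by linarith
  qed
  show "card ?C \<le> 2 * t + 1" if no_common: "\<not> (\<exists>j\<in>{1..n}. (i, j) \<in> V n - S \<and> (i', j) \<in> V n - S)"
  proof (cases "?C = {}")
    case False
    then obtain a j where "(a, j) \<in> ?C" by auto
    then have j: "j \<in> {1..n}" and "of_bool ((i, j) \<in> S) + of_bool ((i', j) \<in> S) \<le> (1::nat)"
      using no_common i i' by (auto simp: layer_def V_def)
    then show ?thesis using bound[OF j] \<open>t \<le> n\<close> by linarith
  qed simp
qed

end
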